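(* Let $(\boldsymbol{X},S,L,A,R)$ be as in the context, fix $l\in\mathcal{L}$ and $\epsilon\ge0$. For $\omega\in\mathbb{R}$ let $f^*_{l,\omega}$ be a decision function with $I\{f^*_{l,\omega}(\boldsymbol{Z})>0\}=I\{\delta_R(\boldsymbol{Z})-\omega I(L=l)\psi_l(S)>0\}$, and define $$G_l(\omega)=E\big[I(f^*_{l,\omega}(\boldsymbol{Z})>0)I(L=l)\psi_l(S)\big],\qquad V_l(\omega)=E\big[I(f^*_{l,\omega}(\boldsymbol{Z})>0)\delta_R(\boldsymbol{Z})\big].$$ Assume $G_l$ is continuous on $\mathbb{R}$ and conditions (C1) and (C4) below hold. Then: $G_l(\omega)$ is non-increasing in $\omega\in\mathbb{R}$; $V_l(\omega)$ is non-decreasing for $\omega\le0$ and non-increasing for $\omega>0$. Moreover, for a sufficiently large constant $K>0$: if $G_l(0)>\epsilon$, there exists $\omega^*_l\in(0,K)$ with $G_l(\omega^*_l)=\epsilon$; if $G_l(0)<-\epsilon$, there exists $\omega^*_l\in(-K,0)$ with $G_l(\omega^*_l)=-\epsilon$. (C1): $P(S=s\mid L=l)>c_0>0$ for all $s\in\{0,1\}$, $l\in\mathcal{L}$. (C4): the functions $f_0(\boldsymbol{z})=E(R\mid\boldsymbol{Z}=\boldsymbol{z},A=-1)$ and $f_1(\boldsymbol{z})=E(R\mid\boldsymbol{Z}=\boldsymbol{z},A=1)$ belong to the Hölder class $\mathcal{H}^\beta([0,1]^d,B_0)$ with $d=p+2$.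
   Context: $\boldsymbol{X}\in\mathbb{R}^p$ covariates, $S\in\{0,1\}$ sensitive attribute, $L$ categorical feature with finite range $\mathcal{L}$, $A\in\{1,-1\}$ treatment, $R$ outcome, $\boldsymbol{Z}=(\boldsymbol{X},S,L)$ (taking values in $[0,1]^d$, $d=p+2$, for (C4)). $\pi(s\mid l)=P(S=s\mid L=l)$, $\psi_l(S)=\frac{I(S=1)}{\pi(1\mid l)}-\frac{I(S=0)}{\pi(0\mid l)}$, $\delta_R(\boldsymbol{Z})=E[R\mid\boldsymbol{Z},A=1]-E[R\mid\boldsymbol{Z},A=-1]$. Hölder class: for $\beta=s+r$, $r\in(0,1]$, $s=\lfloor\beta\rfloor$ (largest integer strictly smaller than $\beta$), $\mathcal{H}^\beta([0,1]^d,B_0)$ is the set of $f:[0,1]^d\to\mathbb{R}$ with $\max_{\|\alpha\|_1\le s}\|\partial^\alpha f\|_\infty\le B_0$ and $\max_{\|\alpha\|_1=s}\sup_{x\ne y}|\partial^\alpha f(x)-\partial^\alpha f(y)|/\|x-y\|_2^r\le B_0$. *)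

theory Defs
  imports "HOL-Probability.Probability"
begin

definition unit_cube :: "(real^'d) set" where
  "unit_cube = {x. \<forall>i. 0 \<le> x$i \<and> x$i \<le> 1}"

text \<open>Hoelder class H^beta([0,1]^d, B0). s = largest integer strictly smaller than beta,
  r = beta - s in (0,1]. D alpha stands for the partial derivative of order alpha
  (multi-index alpha :: 'd => nat, |alpha| = sum of entries); partial derivatives are
  taken within the cube (one-sided at the boundary).\<close>
definition holder_class :: "real \<Rightarrow> real \<Rightarrow> (real^'d \<Rightarrow> real) \<Rightarrow> bool" where
  "holder_class \<beta> B0 f \<longleftrightarrow>
    (let s = nat (\<lceil>\<beta>\<rceil> - 1); r = \<beta> - real s in
     \<exists>D :: ('d \<Rightarrow> nat) \<Rightarrow> real^'d \<Rightarrow> real.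
       (\<forall>x\<in>unit_cube. D (\<lambda>_. 0) x = f x) \<and>
       (\<forall>\<alpha> i. sum \<alpha> UNIV < s \<longrightarrow> (\<forall>x\<in>unit_cube.
          ((\<lambda>t. D \<alpha> (x + t *\<^sub>R axis i 1)) has_real_derivative D (\<alpha>(i := \<alpha> i + 1)) x)
            (at 0 within {t. x + t *\<^sub>R axis i 1 \<in> unit_cube}))) \<and>
       (\<forall>\<alpha>. sum \<alpha> UNIV \<le> s \<longrightarrow> (\<forall>x\<in>unit_cube. \<bar>D \<alpha> x\<bar> \<le> B0)) \<and>
       (\<forall>\<alpha>. sum \<alpha> UNIV = s \<longrightarrow> (\<forall>x\<in>unit_cube. \<forall>y\<in>unit_cube.
          \<bar>D \<alpha> x - D \<alpha> y\<bar> \<le> B0 * norm (x - y) powr r)))"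

text \<open>Z = (X, S, L) as a vector in R^(p+2), indexed by the type 'p + bool
  (Inl j: j-th coordinate of X; Inr False: S; Inr True: L).\<close>
definition Zvec :: "real^'p \<Rightarrow> real \<Rightarrow> real \<Rightarrow> real^('p + bool)" where
  "Zvec x s l = (\<chi> i. case i of Inl j \<Rightarrow> x$j | Inr b \<Rightarrow> (if b then l else s))"

definition cprob :: "'w measure \<Rightarrow> ('w \<Rightarrow> real) \<Rightarrow> ('w \<Rightarrow> real) \<Rightarrow> real \<Rightarrow> real \<Rightarrow> real" where
  "cprob M S L s l =
     measure M {w\<in>space M. S w = s \<and> L w = l} / measure M {w\<in>space M. L w = l}"

definition psi :: "'w measure \<Rightarrow> ('w \<Rightarrow> real) \<Rightarrow> ('w \<Rightarrow> real) \<Rightarrow> real \<Rightarrow> real \<Rightarrow> real" where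
  "psi M S L l s = (if s = 1 then 1 / cprob M S L 1 l else 0) - (if s = 0 then 1 / cprob M S L 0 l else 0)"

definition Gfun :: "'w measure \<Rightarrow> ('w \<Rightarrow> real) \<Rightarrow> ('w \<Rightarrow> real) \<Rightarrow> ('w \<Rightarrow> 'z)
    \<Rightarrow> (real \<Rightarrow> 'z \<Rightarrow> real) \<Rightarrow> real \<Rightarrow> real \<Rightarrow> real" where
  "Gfun M S L Z f l \<omega> = (\<integral>w. (if f \<omega> (Z w) > 0 then 1 else 0) * (if L w = l then 1 else 0)
       * psi M S L l (S w) \<partial>M)"

definition Vfun :: "'w measure \<Rightarrow> ('w \<Rightarrow> 'z) \<Rightarrow> (real \<Rightarrow> 'z \<Rightarrow> real) \<Rightarrow> ('z \<Rightarrow> real)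
    \<Rightarrow> real \<Rightarrow> real" where
  "Vfun M Z f \<delta> \<omega> = (\<integral>w. (if f \<omega> (Z w) > 0 then 1 else 0) * \<delta> (Z w) \<partial>M)"

end

(*
  Write d = delta_R(Z) and c = I(L = l) psi_l(S). For fixed data, the indicator I(d - omega c > 0)
  is nonincreasing in omega where c > 0 and nondecreasing where c < 0, so its product with c is
  nonincreasing: this is the monotonicity of G_l. As omega moves towards 0 the rule only switches
  on points with d > 0 and only switches off points with d <= 0, which gives the monotonicity of V_l.
  Since pi(s | l) <= 1, the weight c is either 0 or of modulus at least 1, while the Hoelder bound
  gives |d| <= 2 B0; hence for omega >= 2 B0 only points with c <= 0 are accepted, so
  G_l(2 B0) <= 0 <= G_l(-2 B0) and the intermediate value theorem yields omega*_l.
  Hoelder continuity is needed only to make d measurable.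
*)

theory Submission
  imports Defs
begin

text \<open>I(f*_{l,omega}(Z) > 0) in the paper's notation, with d = delta_R(Z) and c = I(L = l) psi_l(S).\<close>
definition threshold_ind :: "real \<Rightarrow> real \<Rightarrow> real \<Rightarrow> real" where
  "threshold_ind d c \<omega> = (if d - \<omega> * c > 0 then 1 else 0)"

lemma threshold_ind_uminus: "threshold_ind d c (- \<omega>) = threshold_ind d (- c) \<omega>"
  by (simp add: threshold_ind_def)

lemma threshold_ind_weight_antimono:
  assumes "\<omega>1 \<le> \<omega>2"
  shows "threshold_ind d c \<omega>2 * c \<le> threshold_ind d c \<omega>1 * c"
proof (cases "c \<ge> 0")
  case True
  then have "\<omega>1 * c \<le> \<omega>2 * c" using assms by (intro mult_right_mono)
  with True show ?thesis by (auto simp: threshold_ind_def)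
next
  case False
  then have "\<omega>2 * c \<le> \<omega>1 * c" using assms by (intro mult_right_mono_neg) auto
  with False show ?thesis unfolding threshold_ind_def by (simp only: split: if_split) linarith
qed

lemma threshold_ind_value_mono_nonpos:
  assumes "\<omega>1 \<le> \<omega>2" "\<omega>2 \<le> 0"
  shows "threshold_ind d c \<omega>1 * d \<le> threshold_ind d c \<omega>2 * d"
proof (cases "c \<ge> 0")
  case True
  then have "\<omega>1 * c \<le> \<omega>2 * c" "\<omega>2 * c \<le> 0"
    using assms by (auto intro: mult_right_mono mult_nonpos_nonneg)
  then show ?thesis by (auto simp: threshold_ind_def)
next
  case False
  then have "\<omega>2 * c \<le> \<omega>1 * c" "0 \<le> \<omega>2 * c"
    using assms by (auto intro: mult_right_mono_neg mult_nonpos_nonpos)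
  then show ?thesis by (auto simp: threshold_ind_def)
qed

lemma threshold_ind_value_antimono_nonneg:
  assumes "0 \<le> \<omega>1" "\<omega>1 \<le> \<omega>2"
  shows "threshold_ind d c \<omega>2 * d \<le> threshold_ind d c \<omega>1 * d"
  using threshold_ind_value_mono_nonpos[of "- \<omega>2" "- \<omega>1" d "- c"] assms
  by (simp add: threshold_ind_uminus)

lemma threshold_ind_weight_nonpos:
  assumes "\<bar>d\<bar> \<le> B" "B \<le> \<omega>" "c = 0 \<or> 1 \<le> \<bar>c\<bar>"
  shows "threshold_ind d c \<omega> * c \<le> 0"
proof -
  consider "c \<le> 0" | "1 \<le> c" using assms(3) by linarith
  then show ?thesis
  proof cases
    case 1
    then show ?thesis by (simp add: threshold_ind_def)
  next
    case 2
    have "0 \<le> \<omega>" using assms(1,2) by linarith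
    with 2 have "\<omega> \<le> \<omega> * c" using mult_left_mono[of 1 c \<omega>] by simp
    with assms(1,2) have "d \<le> \<omega> * c" by linarith
    then show ?thesis by (simp add: threshold_ind_def)
  qed
qed

locale threshold_rule =
  fixes M :: "'w measure" and d c :: "'w \<Rightarrow> real"
  assumes integrable_d: "integrable M d" and integrable_c: "integrable M c"
begin

definition G :: "real \<Rightarrow> real" where
  "G \<omega> = (\<integral>w. threshold_ind (d w) (c w) \<omega> * c w \<partial>M)"

definition V :: "real \<Rightarrow> real" where
  "V \<omega> = (\<integral>w. threshold_ind (d w) (c w) \<omega> * d w \<partial>M)"

lemma integrable_threshold_ind_mult:
  assumes h: "integrable M h"
  shows "integrable M (\<lambda>w. threshold_ind (d w) (c w) \<omega> * h w)"
proof (rule Bochner_Integration.integrable_bound[OF h])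
  have [measurable]: "d \<in> borel_measurable M" "c \<in> borel_measurable M" "h \<in> borel_measurable M"
    using integrable_d integrable_c h by auto
  show "(\<lambda>w. threshold_ind (d w) (c w) \<omega> * h w) \<in> borel_measurable M"
    unfolding threshold_ind_def by measurable
  show "AE w in M. norm (threshold_ind (d w) (c w) \<omega> * h w) \<le> norm (h w)"
    by (simp add: threshold_ind_def)
qed

lemma G_antimono: "\<omega>1 \<le> \<omega>2 \<Longrightarrow> G \<omega>2 \<le> G \<omega>1"
  unfolding G_def
  by (intro integral_mono integrable_threshold_ind_mult integrable_c threshold_ind_weight_antimono)

lemma V_mono_nonpos: "\<omega>1 \<le> \<omega>2 \<Longrightarrow> \<omega>2 \<le> 0 \<Longrightarrow> V \<omega>1 \<le> V \<omega>2"
  unfolding V_def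
  by (intro integral_mono integrable_threshold_ind_mult integrable_d threshold_ind_value_mono_nonpos)

lemma V_antimono_nonneg: "0 \<le> \<omega>1 \<Longrightarrow> \<omega>1 \<le> \<omega>2 \<Longrightarrow> V \<omega>2 \<le> V \<omega>1"
  unfolding V_def
  by (intro integral_mono integrable_threshold_ind_mult integrable_d threshold_ind_value_antimono_nonneg)

end

locale bounded_threshold_rule = threshold_rule +
  fixes B :: real
  assumes d_bounded: "AE w in M. \<bar>d w\<bar> \<le> B"
    and c_gap: "AE w in M. c w = 0 \<or> 1 \<le> \<bar>c w\<bar>"
begin

lemma G_nonpos:
  assumes "B \<le> \<omega>"
  shows "G \<omega> \<le> 0"
proof -
  have "AE w in M. threshold_ind (d w) (c w) \<omega> * c w \<le> 0"
    using d_bounded c_gap by eventually_elim (rule threshold_ind_weight_nonpos[OF _ assms])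
  then have "G \<omega> \<le> (\<integral>w. 0 \<partial>M)"
    unfolding G_def by (intro integral_mono_AE integrable_threshold_ind_mult integrable_c) simp
  then show ?thesis by simp
qed

lemma G_nonneg:
  assumes "\<omega> \<le> - B"
  shows "0 \<le> G \<omega>"
proof -
  have "AE w in M. 0 \<le> threshold_ind (d w) (c w) \<omega> * c w"
    using d_bounded c_gap
  proof eventually_elim
    case (elim w)
    then show ?case
      using threshold_ind_weight_nonpos[of "d w" B "- \<omega>" "- c w"] assms
      by (simp add: threshold_ind_uminus)
  qed
  then show ?thesis unfolding G_def by (rule integral_nonneg_AE)
qed

lemma G_attains_pos_level:
  assumes cont: "continuous_on UNIV G" and "0 \<le> \<epsilon>" "\<epsilon> < G 0"
  shows "\<exists>\<omega>\<in>{0<..B}. G \<omega> = \<epsilon>"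
proof -
  have "0 \<le> B" using G_nonpos[of 0] assms by linarith
  then obtain \<omega> where "0 \<le> \<omega>" "\<omega> \<le> B" "G \<omega> = \<epsilon>"
    using IVT2'[of G B \<epsilon> 0] G_nonpos[of B] assms continuous_on_subset[OF cont] by auto
  moreover have "\<omega> \<noteq> 0" using \<open>G \<omega> = \<epsilon>\<close> assms by auto
  ultimately show ?thesis by auto
qed

lemma G_attains_neg_level:
  assumes cont: "continuous_on UNIV G" and "0 \<le> \<epsilon>" "G 0 < - \<epsilon>"
  shows "\<exists>\<omega>\<in>{- B..<0}. G \<omega> = - \<epsilon>"
proof -
  have "0 \<le> B" using G_nonneg[of 0] assms by linarith
  then obtain \<omega> where "- B \<le> \<omega>" "\<omega> \<le> 0" "G \<omega> = - \<epsilon>"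
    using IVT2'[of G 0 "- \<epsilon>" "- B"] G_nonneg[of "- B"] assms continuous_on_subset[OF cont] by auto
  moreover have "\<omega> \<noteq> 0" using \<open>G \<omega> = - \<epsilon>\<close> assms by auto
  ultimately show ?thesis by auto
qed

end

lemma holder_continuous_on:
  fixes f :: "'a::metric_space \<Rightarrow> 'b::metric_space"
  assumes r: "0 < r" and C: "0 \<le> C"
    and holder: "\<And>x y. x \<in> U \<Longrightarrow> y \<in> U \<Longrightarrow> dist (f x) (f y) \<le> C * dist x y powr r"
  shows "continuous_on U f"
  unfolding continuous_on_iff
proof (intro ballI allI impI)
  fix x e assume x: "x \<in> U" and e: "(0::real) < e"
  define \<delta> where "\<delta> = (e / (C + 1)) powr (1 / r)"
  show "\<exists>\<delta>>0. \<forall>y\<in>U. dist y x < \<delta> \<longrightarrow> dist (f y) (f x) < e"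
  proof (intro exI[of _ \<delta>] conjI ballI impI)
    show "0 < \<delta>" using e C by (simp add: \<delta>_def)
    fix y assume y: "y \<in> U" and "dist y x < \<delta>"
    then have "dist y x powr r < \<delta> powr r"
      using r by (simp add: powr_less_mono2)
    also have "\<delta> powr r = e / (C + 1)"
      using e C r by (simp add: \<delta>_def powr_powr)
    finally have "C * dist y x powr r \<le> C * (e / (C + 1))"
      using C by (intro mult_left_mono) auto
    also have "\<dots> < e" using C e by (simp add: field_simps)
    finally show "dist (f y) (f x) < e" using holder[OF y x] by linarith
  qed
qed

lemma unit_cube_axis_line:
  fixes x :: "real^'d"
  assumes "x \<in> unit_cube"
  shows "{t. x + t *\<^sub>R axis i 1 \<in> unit_cube} = {- x$i .. 1 - x$i}"
  using assms unfolding unit_cube_def by (auto simp: axis_def)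

lemma unit_cube_axis_lipschitz:
  fixes g g' :: "real^'d \<Rightarrow> real"
  assumes der: "\<And>y. y \<in> unit_cube \<Longrightarrow> ((\<lambda>t. g (y + t *\<^sub>R axis i 1)) has_real_derivative g' y)
            (at 0 within {t. y + t *\<^sub>R axis i 1 \<in> unit_cube})"
    and bound: "\<And>y. y \<in> unit_cube \<Longrightarrow> \<bar>g' y\<bar> \<le> B"
    and x: "x \<in> unit_cube" and xt: "x + t *\<^sub>R axis i 1 \<in> unit_cube"
  shows "\<bar>g (x + t *\<^sub>R axis i 1) - g x\<bar> \<le> B * \<bar>t\<bar>"
proof -
  define T where "T = {t. x + t *\<^sub>R axis i 1 \<in> unit_cube}"
  have "convex T" unfolding T_def using unit_cube_axis_line[OF x] by simp
  moreover have "((\<lambda>t. g (x + t *\<^sub>R axis i 1)) has_field_derivative g' (x + t0 *\<^sub>R axis i 1)) (at t0 within T)"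
    if t0: "t0 \<in> T" for t0
  proof -
    define y where "y = x + t0 *\<^sub>R axis i 1"
    have y: "y \<in> unit_cube" using t0 by (simp add: T_def y_def)
    have "((\<lambda>u. g (x + (t0 + u) *\<^sub>R axis i 1)) has_field_derivative g' y)
            (at 0 within {u. y + u *\<^sub>R axis i 1 \<in> unit_cube})"
      using der[OF y] unfolding y_def by (simp add: scaleR_add_left add.assoc)
    then have "((\<lambda>t. g (x + t *\<^sub>R axis i 1)) has_field_derivative g' y)
        (at (t0 + 0) within (+) t0 ` {u. y + u *\<^sub>R axis i 1 \<in> unit_cube})"
      using DERIV_at_within_shift[where f="\<lambda>t. g (x + t *\<^sub>R axis i 1)" and z=t0 and x=0] by simp
    moreover have "(+) t0 ` {u. y + u *\<^sub>R axis i 1 \<in> unit_cube} = T"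
      unfolding T_def y_def
      by (force simp: image_iff algebra_simps intro!: exI[where x="_ - t0"])
    ultimately show ?thesis by (simp add: y_def)
  qed
  ultimately have "norm (g (x + t *\<^sub>R axis i 1) - g (x + 0 *\<^sub>R axis i 1)) \<le> B * norm (t - 0)"
    by (rule field_differentiable_bound) (use bound x xt in \<open>auto simp: T_def\<close>)
  then show ?thesis by simp
qed

text \<open>Move from x to y one coordinate at a time, through the corners of the box they span.\<close>
lemma unit_cube_axiswise_lipschitz_bound:
  fixes g :: "real^'d \<Rightarrow> real"
  assumes lip: "\<And>i x t. x \<in> unit_cube \<Longrightarrow> x + t *\<^sub>R axis i 1 \<in> unit_cube \<Longrightarrow>
        \<bar>g (x + t *\<^sub>R axis i 1) - g x\<bar> \<le> B * \<bar>t\<bar>"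
    and x: "x \<in> unit_cube" and y: "y \<in> unit_cube"
  shows "\<bar>g y - g x\<bar> \<le> B * (\<Sum>i\<in>UNIV. \<bar>y$i - x$i\<bar>)"
proof -
  define corner where "corner J = (\<chi> i. if i \<in> J then y$i else x$i)" for J
  have corner_cube: "corner J \<in> unit_cube" for J
    using x y unfolding unit_cube_def corner_def by auto
  have "\<bar>g (corner J) - g x\<bar> \<le> B * (\<Sum>i\<in>J. \<bar>y$i - x$i\<bar>)" if "finite J" for J
    using that
  proof (induction J rule: finite_induct)
    case empty
    have "corner {} = x" by (simp add: corner_def vec_eq_iff)
    then show ?case by simp
  next
    case (insert i J)
    have "corner (insert i J) = corner J + (y$i - x$i) *\<^sub>R axis i 1"
      using insert(2) by (auto simp: corner_def vec_eq_iff axis_def)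
    then have "\<bar>g (corner (insert i J)) - g (corner J)\<bar> \<le> B * \<bar>y$i - x$i\<bar>"
      using lip corner_cube by metis
    then show ?case using insert by (simp add: distrib_left)
  qed
  moreover have "corner UNIV = y" by (simp add: corner_def vec_eq_iff)
  ultimately show ?thesis by (metis finite)
qed

lemma holder_class_bounded:
  assumes "holder_class \<beta> B0 f" "x \<in> unit_cube"
  shows "\<bar>f x\<bar> \<le> B0"
  using assms unfolding holder_class_def Let_def by (metis sum.neutral_const zero_le)

lemma holder_class_bound_nonneg: "holder_class \<beta> B0 f \<Longrightarrow> 0 \<le> B0"
  using holder_class_bounded[of \<beta> B0 f 0] by (simp add: unit_cube_def)

lemma holder_class_continuous_on:
  fixes f :: "real^'d \<Rightarrow> real"
  assumes "0 < \<beta>" and "holder_class \<beta> B0 f"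
  shows "continuous_on unit_cube f"
proof -
  define s where "s = nat (\<lceil>\<beta>\<rceil> - 1)"
  define r where "r = \<beta> - real s"
  obtain D :: "('d \<Rightarrow> nat) \<Rightarrow> real^'d \<Rightarrow> real" where
    D0: "\<forall>x\<in>unit_cube. D (\<lambda>_. 0) x = f x" and
    Dd: "\<forall>\<alpha> i. sum \<alpha> UNIV < s \<longrightarrow> (\<forall>x\<in>unit_cube.
          ((\<lambda>t. D \<alpha> (x + t *\<^sub>R axis i 1)) has_real_derivative D (\<alpha>(i := \<alpha> i + 1)) x)
            (at 0 within {t. x + t *\<^sub>R axis i 1 \<in> unit_cube}))" and
    Db: "\<forall>\<alpha>. sum \<alpha> UNIV \<le> s \<longrightarrow> (\<forall>x\<in>unit_cube. \<bar>D \<alpha> x\<bar> \<le> B0)" and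
    Dh: "\<forall>\<alpha>. sum \<alpha> UNIV = s \<longrightarrow> (\<forall>x\<in>unit_cube. \<forall>y\<in>unit_cube.
          \<bar>D \<alpha> x - D \<alpha> y\<bar> \<le> B0 * norm (x - y) powr r)"
    using assms(2) unfolding holder_class_def Let_def s_def r_def by blast
  have B0: "0 \<le> B0" using assms(2) by (rule holder_class_bound_nonneg)
  show ?thesis
  proof (cases "s = 0")
    case True
    then have "r = \<beta>" by (simp add: r_def)
    with True D0 Dh have "dist (f x) (f y) \<le> B0 * dist x y powr \<beta>"
      if "x \<in> unit_cube" "y \<in> unit_cube" for x y
      using that by (force simp: dist_real_def dist_norm)
    then show ?thesis by (rule holder_continuous_on[OF assms(1) B0])
  next
    case False
    text \<open>For s \<ge> 1 the first-order partials exist and are bounded by B0, so f is Lipschitz.\<close>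
    have unit_sum: "sum ((\<lambda>_. 0::nat)(i := 1)) UNIV = 1" for i :: 'd
      by (simp add: fun_upd_def)
    have "\<bar>f (x + t *\<^sub>R axis i 1) - f x\<bar> \<le> B0 * \<bar>t\<bar>"
      if "x \<in> unit_cube" "x + t *\<^sub>R axis i 1 \<in> unit_cube" for i x t
    proof -
      have "\<bar>D (\<lambda>_. 0) (x + t *\<^sub>R axis i 1) - D (\<lambda>_. 0) x\<bar> \<le> B0 * \<bar>t\<bar>"
      proof (rule unit_cube_axis_lipschitz[OF _ _ that])
        show "((\<lambda>t. D (\<lambda>_. 0) (y + t *\<^sub>R axis i 1)) has_real_derivative D ((\<lambda>_. 0)(i := 1)) y)
            (at 0 within {t. y + t *\<^sub>R axis i 1 \<in> unit_cube})" if "y \<in> unit_cube" for y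
          using Dd False that by force
        show "\<bar>D ((\<lambda>_. 0)(i := 1)) y\<bar> \<le> B0" if "y \<in> unit_cube" for y
          using Db False that unit_sum[of i] by force
      qed
      with D0 that show ?thesis by simp
    qed
    then have "\<bar>f y - f x\<bar> \<le> B0 * (\<Sum>i\<in>UNIV. \<bar>y$i - x$i\<bar>)"
      if "x \<in> unit_cube" "y \<in> unit_cube" for x y
      using unit_cube_axiswise_lipschitz_bound that by blast
    also have "(\<Sum>i\<in>UNIV. \<bar>y$i - x$i\<bar>) \<le> CARD('d) * dist y x" for x y :: "real^'d"
      using sum_mono[of UNIV "\<lambda>i. \<bar>y$i - x$i\<bar>" "\<lambda>_. dist y x"]
      by (simp add: dist_norm component_le_norm_cart flip: vector_minus_component)
    finally have "(B0 * CARD('d))-lipschitz_on unit_cube f"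
      using B0 by (intro lipschitz_onI) (auto simp: dist_real_def mult_left_mono mult.assoc)
    then show ?thesis by (rule lipschitz_on_continuous_on)
  qed
qed

lemma closed_unit_cube: "closed unit_cube"
  unfolding unit_cube_def
  by (intro closed_Collect_all closed_Collect_conj closed_Collect_le continuous_intros)

lemma borel_measurable_continuous_on_comp:
  fixes g :: "'a::topological_space \<Rightarrow> 'b::real_normed_vector"
  assumes "continuous_on A g" "A \<in> sets borel"
    and "Z \<in> M \<rightarrow>\<^sub>M borel" "\<And>w. w \<in> space M \<Longrightarrow> Z w \<in> A"
  shows "(\<lambda>w. g (Z w)) \<in> borel_measurable M"
proof -
  have "(\<lambda>z. indicator A z *\<^sub>R g z) \<in> borel_measurable borel"
    using assms(2,1) by (rule borel_measurable_continuous_on_indicator)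
  then have "(\<lambda>w. indicator A (Z w) *\<^sub>R g (Z w)) \<in> borel_measurable M"
    using assms(3) by measurable
  then show ?thesis
    by (rule measurable_cong[THEN iffD1, rotated]) (simp add: assms(4))
qed

lemma borel_measurable_Zvec:
  fixes X :: "'w \<Rightarrow> real^'p"
  assumes [measurable]: "X \<in> borel_measurable M" "S \<in> borel_measurable M" "L \<in> borel_measurable M"
  shows "(\<lambda>w. Zvec (X w) (S w) (L w)) \<in> borel_measurable M"
proof -
  have "continuous_on UNIV (\<lambda>u::(real^'p) \<times> real \<times> real.
      case i of Inl j \<Rightarrow> fst u $ j | Inr b \<Rightarrow> if b then snd (snd u) else fst (snd u))"
    for i :: "'p + bool"
  proof (cases i)
    case (Inr b)
    then show ?thesis by (cases b) (auto intro!: continuous_intros)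
  qed (auto intro!: continuous_intros)
  then have "continuous_on UNIV (\<lambda>(x::real^'p, s, l). Zvec x s l)"
    unfolding Zvec_def case_prod_beta by (intro continuous_intros)
  then have "(\<lambda>w. (\<lambda>(x, s, l). Zvec x s l) (X w, S w, L w)) \<in> borel_measurable M"
    by (rule borel_measurable_continuous_on) measurable
  then show ?thesis by simp
qed

definition fairness_weight :: "'w measure \<Rightarrow> ('w \<Rightarrow> real) \<Rightarrow> ('w \<Rightarrow> real) \<Rightarrow> real \<Rightarrow> 'w \<Rightarrow> real"
  where "fairness_weight M S L l w = (if L w = l then 1 else 0) * psi M S L l (S w)"

lemma borel_measurable_psi: "psi M S L l \<in> borel_measurable borel"
  unfolding psi_def by measurable

context prob_space
begin

lemma cprob_le_1:
  assumes "L \<in> borel_measurable M"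
  shows "cprob M S L s l \<le> 1"
proof -
  have "measure M {w \<in> space M. S w = s \<and> L w = l} \<le> measure M {w \<in> space M. L w = l}"
    using assms by (intro finite_measure_mono) auto
  then show ?thesis unfolding cprob_def by (simp add: divide_le_eq_1 less_le)
qed

lemma integrable_fairness_weight:
  assumes [measurable]: "S \<in> borel_measurable M" "L \<in> borel_measurable M"
    and S_vals: "\<forall>w\<in>space M. S w \<in> {0, 1}"
  shows "integrable M (fairness_weight M S L l)"
proof (rule integrable_const_bound)
  show "AE w in M. norm (fairness_weight M S L l w) \<le> \<bar>psi M S L l 0\<bar> + \<bar>psi M S L l 1\<bar>"
    using S_vals by (intro AE_I2) (auto simp: fairness_weight_def)
  note borel_measurable_psi[measurable]
  show "fairness_weight M S L l \<in> borel_measurable M"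
    unfolding fairness_weight_def by measurable
qed

lemma fairness_weight_gap:
  assumes "L \<in> borel_measurable M"
    and S_vals: "\<forall>w\<in>space M. S w \<in> {0, 1}"
    and pos: "0 < cprob M S L 0 l" "0 < cprob M S L 1 l"
  shows "AE w in M. fairness_weight M S L l w = 0 \<or> 1 \<le> \<bar>fairness_weight M S L l w\<bar>"
proof -
  have "1 \<le> \<bar>psi M S L l s\<bar>" if "s \<in> {0, 1}" for s
    using that pos cprob_le_1[OF assms(1), of S] by (auto simp: psi_def)
  then show ?thesis
    using S_vals by (intro AE_I2) (auto simp: fairness_weight_def)
qed

lemma holder_difference_bounded:
  assumes "\<forall>w\<in>space M. Z w \<in> unit_cube" "holder_class \<beta> B0 f0" "holder_class \<beta> B0 f1"
  shows "AE w in M. \<bar>f1 (Z w) - f0 (Z w)\<bar> \<le> 2 * B0"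
proof (rule AE_I2)
  fix w assume "w \<in> space M"
  then have "\<bar>f1 (Z w)\<bar> \<le> B0" "\<bar>f0 (Z w)\<bar> \<le> B0"
    using assms holder_class_bounded by blast+
  then show "\<bar>f1 (Z w) - f0 (Z w)\<bar> \<le> 2 * B0" by linarith
qed

lemma integrable_holder_difference:
  fixes f0 f1 :: "real^'d \<Rightarrow> real"
  assumes Z: "Z \<in> borel_measurable M" "\<forall>w\<in>space M. Z w \<in> unit_cube"
    and holder: "0 < \<beta>" "holder_class \<beta> B0 f0" "holder_class \<beta> B0 f1"
  shows "integrable M (\<lambda>w. f1 (Z w) - f0 (Z w))"
proof (rule integrable_const_bound)
  show "AE w in M. norm (f1 (Z w) - f0 (Z w)) \<le> 2 * B0"
    using holder_difference_bounded[OF Z(2) holder(2,3)] by simp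
  have cube: "unit_cube \<in> sets borel" "Z \<in> borel_measurable M" "\<And>w. w \<in> space M \<Longrightarrow> Z w \<in> unit_cube"
    using borel_closed[OF closed_unit_cube] Z by auto
  have [measurable]: "(\<lambda>w. f0 (Z w)) \<in> borel_measurable M"
    by (rule borel_measurable_continuous_on_comp[OF holder_class_continuous_on[OF holder(1,2)] cube])
  have [measurable]: "(\<lambda>w. f1 (Z w)) \<in> borel_measurable M"
    by (rule borel_measurable_continuous_on_comp[OF holder_class_continuous_on[OF holder(1,3)] cube])
  show "(\<lambda>w. f1 (Z w) - f0 (Z w)) \<in> borel_measurable M"
    by measurable
qed

end

theorem lemma1:
  fixes M :: "'w measure"
    and X :: "'w \<Rightarrow> real^'p" and S L A R :: "'w \<Rightarrow> real"
    and \<L> :: "real set" and l \<epsilon> c0 \<beta> B0 :: real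
    and f0 f1 :: "real^('p + bool) \<Rightarrow> real"
    and f :: "real \<Rightarrow> real^('p + bool) \<Rightarrow> real"
  defines "Z \<equiv> (\<lambda>w. Zvec (X w) (S w) (L w))"
    and "\<delta> \<equiv> (\<lambda>z. f1 z - f0 z)"
  assumes prob: "prob_space M"
    and meas: "X \<in> borel_measurable M" "S \<in> borel_measurable M" "L \<in> borel_measurable M"
      "A \<in> borel_measurable M" "R \<in> borel_measurable M"
    and R_int: "integrable M R"
    and S_vals: "\<forall>w\<in>space M. S w \<in> {0, 1}"
    and A_vals: "\<forall>w\<in>space M. A w \<in> {1, -1}"
    and L_fin: "finite \<L>" and L_vals: "\<forall>w\<in>space M. L w \<in> \<L>"
    and Z_cube: "\<forall>w\<in>space M. Z w \<in> unit_cube"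
    and f1_ce: "\<forall>B\<in>sets borel.
        (\<integral>w. indicator {w\<in>space M. A w = 1 \<and> Z w \<in> B} w * R w \<partial>M)
      = (\<integral>w. indicator {w\<in>space M. A w = 1 \<and> Z w \<in> B} w * f1 (Z w) \<partial>M)"
    and f0_ce: "\<forall>B\<in>sets borel.
        (\<integral>w. indicator {w\<in>space M. A w = -1 \<and> Z w \<in> B} w * R w \<partial>M)
      = (\<integral>w. indicator {w\<in>space M. A w = -1 \<and> Z w \<in> B} w * f0 (Z w) \<partial>M)"
    and l_in: "l \<in> \<L>" and eps: "\<epsilon> \<ge> 0"
    and f_dec: "\<forall>\<omega>. \<forall>w\<in>space M. (f \<omega> (Z w) > 0) \<longleftrightarrow>
        (\<delta> (Z w) - \<omega> * (if L w = l then 1 else 0) * psi M S L l (S w) > 0)"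
    and G_cont: "continuous_on UNIV (Gfun M S L Z f l)"
    and C1: "c0 > 0" "\<forall>s\<in>{0, 1}. \<forall>l'\<in>\<L>. cprob M S L s l' > c0"
    and C4: "\<beta> > 0" "holder_class \<beta> B0 f0" "holder_class \<beta> B0 f1"
  shows "(\<forall>\<omega>1 \<omega>2. \<omega>1 \<le> \<omega>2 \<longrightarrow> Gfun M S L Z f l \<omega>2 \<le> Gfun M S L Z f l \<omega>1)
    \<and> (\<forall>\<omega>1 \<omega>2. \<omega>1 \<le> \<omega>2 \<and> \<omega>2 \<le> 0 \<longrightarrow> Vfun M Z f \<delta> \<omega>1 \<le> Vfun M Z f \<delta> \<omega>2)
    \<and> (\<forall>\<omega>1 \<omega>2. 0 < \<omega>1 \<and> \<omega>1 \<le> \<omega>2 \<longrightarrow> Vfun M Z f \<delta> \<omega>2 \<le> Vfun M Z f \<delta> \<omega>1)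
    \<and> (\<exists>K > 0.
         (Gfun M S L Z f l 0 > \<epsilon> \<longrightarrow> (\<exists>\<omega>\<in>{0<..<K}. Gfun M S L Z f l \<omega> = \<epsilon>))
       \<and> (Gfun M S L Z f l 0 < - \<epsilon> \<longrightarrow> (\<exists>\<omega>\<in>{-K<..<0}. Gfun M S L Z f l \<omega> = - \<epsilon>)))"
proof -
  interpret prob_space M by (rule prob)
  have "0 < cprob M S L 0 l" "0 < cprob M S L 1 l"
    using C1 l_in by force+
  then interpret bounded_threshold_rule M "\<lambda>w. \<delta> (Z w)" "fairness_weight M S L l" "2 * B0"
    using meas S_vals Z_cube C4 unfolding \<delta>_def
    by unfold_locales (auto intro: integrable_fairness_weight fairness_weight_gap
        integrable_holder_difference holder_difference_bounded borel_measurable_Zvec simp: Z_def)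
  have rule_eq: "(if f \<omega> (Z w) > 0 then 1 else 0)
      = threshold_ind (\<delta> (Z w)) (fairness_weight M S L l w) \<omega>"
    if "w \<in> space M" for w \<omega>
    using f_dec that by (simp add: threshold_ind_def fairness_weight_def mult.assoc)
  have G_eq: "Gfun M S L Z f l = G"
    unfolding Gfun_def G_def
    by (intro ext Bochner_Integration.integral_cong)
      (simp_all add: rule_eq fairness_weight_def mult.assoc)
  have V_eq: "Vfun M Z f \<delta> = V"
    unfolding Vfun_def V_def by (intro ext Bochner_Integration.integral_cong) (simp_all add: rule_eq)
  show ?thesis
    unfolding G_eq V_eq
  proof (intro conjI allI impI exI[of _ "2 * B0 + 1"])
    show "0 < 2 * B0 + 1" using holder_class_bound_nonneg[OF C4(2)] by simp
    show "\<exists>\<omega>\<in>{0<..<2 * B0 + 1}. G \<omega> = \<epsilon>" if "\<epsilon> < G 0"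
      using G_attains_pos_level[OF _ eps that] G_cont G_eq by fastforce
    show "\<exists>\<omega>\<in>{- (2 * B0 + 1)<..<0}. G \<omega> = - \<epsilon>" if "G 0 < - \<epsilon>"
      using G_attains_neg_level[OF _ eps that] G_cont G_eq by fastforce
  qed (auto intro: G_antimono V_mono_nonpos V_antimono_nonneg)
qed

end
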